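(* Let $n\ge4$, $2\le p\le n-1$, $j=n-p+1$. Let $\textnormal{Reg}(\mathcal{OCT}_n)$ be the set of regular elements of $\mathcal{OCT}_n$, $L(n,p)=\{\alpha\in\textnormal{Reg}(\mathcal{OCT}_n):|\textnormal{Im}\,\alpha|\le p\}$, $K_p=\{\alpha\in\textnormal{Reg}(\mathcal{OCT}_n):|\textnormal{Im}\,\alpha|=p\}$, and let $Q_p=K_p\cup\{0\}$ be the Rees quotient $L(n,p)/L(n,p-1)$, with product $\alpha*\beta=\alpha\beta$ if $|\textnormal{Im}(\alpha\beta)|=p$ and $\alpha*\beta=0$ otherwise. Define $\eta,\delta\in\mathcal{T}_n$ by: $x\eta=1$ for $1\le x\le j$ and $(j+i)\eta=i+1$ for $1\le i\le p-1$; $x\delta=x$ for $1\le x\le p-1$ and $x\delta=p$ for $p\le x\le n$. Let $R_\eta=\{\alpha\in K_p:\textnormal{Im}\,\alpha=\textnormal{Im}\,\eta\}$ and $L_\delta=\{\alpha\in K_p:\ker\alpha=\ker\delta\}$. Then $(R_\eta\cup L_\delta)\setminus\{\delta\}$ is a minimal generating set of the semigroup $Q_p$ (it generates $Q_p$ and no proper subset of it does).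
   Context: Maps are written on the right and composed left to right: $x(\alpha\beta)=(x\alpha)\beta$. $\mathcal{T}_n$ is the full transformation semigroup on $[n]=\{1,\dots,n\}$. $\alpha$ is a contraction if $|x\alpha-y\alpha|\le|x-y|$ for all $x,y$, order-preserving if $x\le y\Rightarrow x\alpha\le y\alpha$. $\mathcal{OCT}_n$ is the semigroup of order-preserving contractions; $\alpha\in\mathcal{OCT}_n$ is regular if $\alpha\beta\alpha=\alpha$ for some $\beta\in\mathcal{OCT}_n$ (these form a subsemigroup). $\ker\alpha=\{(x,y):x\alpha=y\alpha\}$. *)

theory Defs
  imports Main
begin

text \<open>Transformations of [n] = {1..n} are represented as functions nat \<Rightarrow> nat
  mapping {1..n} into {1..n} and acting as the identity outside {1..n}
  (a canonical representative). Maps act on the right: x(\<alpha>\<beta>) = (x\<alpha>)\<beta>,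
  so the product \<alpha>\<beta> is the function composition \<beta> \<circ> \<alpha>.\<close>

definition Tn :: "nat \<Rightarrow> (nat \<Rightarrow> nat) set" where
  "Tn n = {a. (\<forall>x\<in>{1..n}. a x \<in> {1..n}) \<and> (\<forall>x. x \<notin> {1..n} \<longrightarrow> a x = x)}"

definition tmul :: "(nat \<Rightarrow> nat) \<Rightarrow> (nat \<Rightarrow> nat) \<Rightarrow> (nat \<Rightarrow> nat)" where
  "tmul a b = b \<circ> a"

definition order_preserving :: "nat \<Rightarrow> (nat \<Rightarrow> nat) \<Rightarrow> bool" where
  "order_preserving n a \<longleftrightarrow> (\<forall>x\<in>{1..n}. \<forall>y\<in>{1..n}. x \<le> y \<longrightarrow> a x \<le> a y)"

definition contraction :: "nat \<Rightarrow> (nat \<Rightarrow> nat) \<Rightarrow> bool" where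
  "contraction n a \<longleftrightarrow> (\<forall>x\<in>{1..n}. \<forall>y\<in>{1..n}.
      \<bar>int (a x) - int (a y)\<bar> \<le> \<bar>int x - int y\<bar>)"

definition OCT :: "nat \<Rightarrow> (nat \<Rightarrow> nat) set" where
  "OCT n = {a \<in> Tn n. order_preserving n a \<and> contraction n a}"

definition RegOCT :: "nat \<Rightarrow> (nat \<Rightarrow> nat) set" where
  "RegOCT n = {a \<in> OCT n. \<exists>b\<in>OCT n. tmul (tmul a b) a = a}"

definition Im :: "nat \<Rightarrow> (nat \<Rightarrow> nat) \<Rightarrow> nat set" where
  "Im n a = a ` {1..n}"

definition ker :: "nat \<Rightarrow> (nat \<Rightarrow> nat) \<Rightarrow> (nat \<times> nat) set" where
  "ker n a = {(x, y). x \<in> {1..n} \<and> y \<in> {1..n} \<and> a x = a y}"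

definition Lnp :: "nat \<Rightarrow> nat \<Rightarrow> (nat \<Rightarrow> nat) set" where
  "Lnp n p = {a \<in> RegOCT n. card (Im n a) \<le> p}"

definition Kp :: "nat \<Rightarrow> nat \<Rightarrow> (nat \<Rightarrow> nat) set" where
  "Kp n p = {a \<in> RegOCT n. card (Im n a) = p}"

text \<open>Rees quotient Q_p = K_p \<union> {0}: the zero is None, an element \<alpha> of K_p is Some \<alpha>.\<close>

definition Qp :: "nat \<Rightarrow> nat \<Rightarrow> (nat \<Rightarrow> nat) option set" where
  "Qp n p = insert None (Some ` Kp n p)"

fun qmul :: "nat \<Rightarrow> nat \<Rightarrow> (nat \<Rightarrow> nat) option \<Rightarrow> (nat \<Rightarrow> nat) option \<Rightarrow> (nat \<Rightarrow> nat) option" where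
  "qmul n p (Some a) (Some b) =
     (if card (Im n (tmul a b)) = p then Some (tmul a b) else None)"
| "qmul n p _ _ = None"

inductive_set gen :: "nat \<Rightarrow> nat \<Rightarrow> (nat \<Rightarrow> nat) option set \<Rightarrow> (nat \<Rightarrow> nat) option set"
  for n p A where
  base: "x \<in> A \<Longrightarrow> x \<in> gen n p A"
| mul: "x \<in> gen n p A \<Longrightarrow> y \<in> gen n p A \<Longrightarrow> qmul n p x y \<in> gen n p A"

definition eta :: "nat \<Rightarrow> nat \<Rightarrow> nat \<Rightarrow> nat" where
  "eta n p x = (let j = n - p + 1 in
     if 1 \<le> x \<and> x \<le> j then 1
     else if j < x \<and> x \<le> n then x - j + 1
     else x)"

definition delta :: "nat \<Rightarrow> nat \<Rightarrow> nat \<Rightarrow> nat" where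
  "delta n p x = (if 1 \<le> x \<and> x \<le> p - 1 then x
     else if p \<le> x \<and> x \<le> n then p
     else x)"

definition R_eta :: "nat \<Rightarrow> nat \<Rightarrow> (nat \<Rightarrow> nat) set" where
  "R_eta n p = {a \<in> Kp n p. Im n a = Im n (eta n p)}"

definition L_delta :: "nat \<Rightarrow> nat \<Rightarrow> (nat \<Rightarrow> nat) set" where
  "L_delta n p = {a \<in> Kp n p. ker n a = ker n (delta n p)}"

end

theory Submission
  imports Defs
begin

text \<open>Every element of K_p is a ramp x \<mapsto> a + min (x - k) (p - 1): constant a up to k, then
  rising with slope one until it reaches a + p - 1. It is determined by its image {a..a+p-1}
  and by its kernel, which only depends on k, and both indices range over {1..n-p+1}. Ramps
  multiply like a rectangular 0-band: ramp a k * ramp b l is ramp b k if a = l, and it has a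
  smaller image, i.e. is 0 in Q_p, otherwise. R_eta is the row a = 1 and L_delta the column
  k = 1; they meet in delta = ramp 1 1. Every ramp a k equals ramp 1 k * ramp a 1, and
  ramp 1 1 = ramp 2 1 * ramp 1 2 (this needs p < n), so the axes without delta generate Q_p.
  Conversely, a product keeps the kernel index of its left factor and the image index of its
  right factor, so no generator ramp 1 k (k \<noteq> 1) or ramp a 1 (a \<noteq> 1) can be omitted.\<close>

lemma contractionI:
  assumes "\<And>x y. x \<in> {1..n} \<Longrightarrow> y \<in> {1..n} \<Longrightarrow> x \<le> y \<Longrightarrow> f x \<le> f y \<and> f y \<le> f x + (y - x)"
  shows "contraction n f"
  unfolding contraction_def
proof (intro ballI)
  fix x y assume "x \<in> {1..n}" "y \<in> {1..n}"
  then show "\<bar>int (f x) - int (f y)\<bar> \<le> \<bar>int x - int y\<bar>"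
    using assms[of x y] assms[of y x] by (cases "x \<le> y") force+
qed

lemma Im_tmul: "Im n (tmul f g) = g ` Im n f"
  unfolding Im_def tmul_def by (simp add: image_comp)

lemma Im_OCT_eq_interval:
  assumes "\<alpha> \<in> OCT n" "1 \<le> n"
  shows "Im n \<alpha> = {\<alpha> 1..\<alpha> n}"
proof
  have mono: "\<alpha> x \<le> \<alpha> y" if "x \<in> {1..n}" "y \<in> {1..n}" "x \<le> y" for x y
    using assms(1) that unfolding OCT_def order_preserving_def by blast
  then show "Im n \<alpha> \<subseteq> {\<alpha> 1..\<alpha> n}"
    using assms(2) unfolding Im_def by auto
  show "{\<alpha> 1..\<alpha> n} \<subseteq> Im n \<alpha>"
  proof
    fix y assume y: "y \<in> {\<alpha> 1..\<alpha> n}"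
    have "\<bar>int (\<alpha> (Suc i)) - int (\<alpha> i)\<bar> \<le> 1" if "1 \<le> i \<and> i < n" for i
    proof -
      have "i \<in> {1..n}" "Suc i \<in> {1..n}" using that by auto
      then have "\<bar>int (\<alpha> i) - int (\<alpha> (Suc i))\<bar> \<le> \<bar>int i - int (Suc i)\<bar>"
        using assms(1) unfolding OCT_def contraction_def by blast
      then show ?thesis by linarith
    qed
    then obtain x where "1 \<le> x" "x \<le> n" "int (\<alpha> x) = int y"
      using nat_intermed_int_val[of 1 n "\<lambda>i. int (\<alpha> i)" "int y"] y assms(2) by auto
    then show "y \<in> Im n \<alpha>"
      unfolding Im_def by auto
  qed
qed

text \<open>\<beta> is injective on the image of \<alpha>, since \<alpha> undoes it there; an injective order-preserving
  contraction moves an interval in unit steps.\<close>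

lemma regular_inverse_shift:
  assumes \<alpha>: "\<alpha> \<in> Tn n" and \<beta>: "\<beta> \<in> OCT n" and reg: "tmul (tmul \<alpha> \<beta>) \<alpha> = \<alpha>"
    and Im: "Im n \<alpha> = {a..a+p-1}" and "i < p"
  shows "\<beta> (a + i) = \<beta> a + i"
  using \<open>i < p\<close>
proof (induction i)
  case (Suc i)
  have range: "{a..a+p-1} \<subseteq> {1..n}"
    using \<alpha> unfolding Im[symmetric] Tn_def Im_def by auto
  have retract: "\<alpha> (\<beta> y) = y" if "y \<in> {a..a+p-1}" for y
    using reg that unfolding Im[symmetric] Im_def tmul_def by (auto simp: fun_eq_iff)
  have "a + i \<in> {a..a+p-1}" "a + Suc i \<in> {a..a+p-1}"
    using Suc.prems by auto
  moreover have "a + i \<in> {1..n}" "a + Suc i \<in> {1..n}"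
    using calculation range by auto
  ultimately have "\<beta> (a + i) \<noteq> \<beta> (a + Suc i)"
    and "\<beta> (a + i) \<le> \<beta> (a + Suc i)"
    and "\<bar>int (\<beta> (a + i)) - int (\<beta> (a + Suc i))\<bar> \<le> \<bar>int (a + i) - int (a + Suc i)\<bar>"
    using retract[of "a + i"] retract[of "a + Suc i"] \<beta>
    unfolding OCT_def order_preserving_def contraction_def
    by (fastforce, simp, blast)
  then show ?case
    using Suc by linarith
qed simp

definition ramp :: "nat \<Rightarrow> nat \<Rightarrow> nat \<Rightarrow> nat \<Rightarrow> nat \<Rightarrow> nat" where
  "ramp n p a k x = (if x \<in> {1..n} then a + min (x - k) (p - 1) else x)"

lemma ramp_in_Tn:
  assumes "a \<in> {1..n-p+1}" "1 \<le> p" "p \<le> n"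
  shows "ramp n p a k \<in> Tn n"
  using assms unfolding Tn_def ramp_def by auto

lemma ramp_in_OCT:
  assumes "a \<in> {1..n-p+1}" "1 \<le> p" "p \<le> n"
  shows "ramp n p a k \<in> OCT n"
proof -
  have "ramp n p a k x \<le> ramp n p a k y \<and> ramp n p a k y \<le> ramp n p a k x + (y - x)"
    if "x \<in> {1..n}" "y \<in> {1..n}" "x \<le> y" for x y
    using that unfolding ramp_def by auto
  then show ?thesis
    using ramp_in_Tn[OF assms] contractionI unfolding OCT_def order_preserving_def by blast
qed

lemma Im_ramp:
  assumes "a \<in> {1..n-p+1}" "k \<in> {1..n-p+1}" "1 \<le> p" "p \<le> n"
  shows "Im n (ramp n p a k) = {a..a+p-1}"
proof
  show "Im n (ramp n p a k) \<subseteq> {a..a+p-1}"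
    using assms(3) unfolding Im_def ramp_def by auto
  show "{a..a+p-1} \<subseteq> Im n (ramp n p a k)"
  proof
    fix y assume "y \<in> {a..a+p-1}"
    then have "ramp n p a k (k + (y - a)) = y" "k + (y - a) \<in> {1..n}"
      using assms unfolding ramp_def by auto
    then show "y \<in> Im n (ramp n p a k)"
      unfolding Im_def by (metis image_eqI)
  qed
qed

lemma ramp_regular:
  assumes "a \<in> {1..n-p+1}" "k \<in> {1..n-p+1}" "1 \<le> p"
  shows "tmul (tmul (ramp n p a k) (ramp n p k a)) (ramp n p a k) = ramp n p a k"
  using assms unfolding tmul_def ramp_def by (auto simp: fun_eq_iff min_def)

lemma ramp_in_Kp:
  assumes "a \<in> {1..n-p+1}" "k \<in> {1..n-p+1}" "1 \<le> p" "p \<le> n"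
  shows "ramp n p a k \<in> Kp n p"
  using ramp_in_OCT[OF assms(1,3,4)] ramp_in_OCT[OF assms(2,3,4)] ramp_regular[OF assms(1-3)]
    Im_ramp[OF assms] assms(3)
  unfolding Kp_def RegOCT_def by auto

lemma ker_ramp_indep_image: "ker n (ramp n p a k) = ker n (ramp n p b k)"
  unfolding ker_def ramp_def by auto

lemma ker_ramp_eq_imp_eq:
  assumes "k \<in> {1..n-p+1}" "l \<in> {1..n-p+1}" "2 \<le> p" "p \<le> n"
    and "ker n (ramp n p a k) = ker n (ramp n p b l)"
  shows "k = l"
proof -
  have "ker n (ramp n p c s) \<noteq> ker n (ramp n p d t)"
    if "s < t" "s \<in> {1..n-p+1}" for s t c d
  proof -
    have "(s, s + 1) \<in> ker n (ramp n p d t)" "(s, s + 1) \<notin> ker n (ramp n p c s)"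
      using that assms(3,4) unfolding ker_def ramp_def by auto
    then show ?thesis by blast
  qed
  then show ?thesis
    using assms by (metis linorder_neqE_nat)
qed

lemma ker_ramp_eq_iff:
  assumes "k \<in> {1..n-p+1}" "l \<in> {1..n-p+1}" "2 \<le> p" "p \<le> n"
  shows "ker n (ramp n p a k) = ker n (ramp n p b l) \<longleftrightarrow> k = l"
  using ker_ramp_eq_imp_eq[OF assms] ker_ramp_indep_image by blast

lemma ramp_eq_iff:
  assumes "k \<in> {1..n-p+1}" "l \<in> {1..n-p+1}" "2 \<le> p" "p \<le> n"
  shows "ramp n p a k = ramp n p b l \<longleftrightarrow> a = b \<and> k = l"
proof
  assume eq: "ramp n p a k = ramp n p b l"
  have "ramp n p a k 1 = a" "ramp n p b l 1 = b"
    using assms unfolding ramp_def by auto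
  then show "a = b \<and> k = l"
    using eq ker_ramp_eq_imp_eq[OF assms] by metis
qed simp

lemma eta_eq_ramp: "1 \<le> p \<Longrightarrow> p \<le> n \<Longrightarrow> eta n p = ramp n p 1 (n - p + 1)"
  unfolding eta_def ramp_def by (auto simp: fun_eq_iff Let_def min_def)

lemma delta_eq_ramp: "1 \<le> p \<Longrightarrow> p \<le> n \<Longrightarrow> delta n p = ramp n p 1 1"
  unfolding delta_def ramp_def by (auto simp: fun_eq_iff min_def)

lemma order_preserving_eq_ramp:
  assumes "\<alpha> \<in> Tn n" "order_preserving n \<alpha>" "Im n \<alpha> = {a..a+p-1}"
    and k: "k \<in> {1..n-p+1}" and "1 \<le> p" "p \<le> n"
    and slope: "\<And>i. i < p \<Longrightarrow> \<alpha> (k + i) = a + i"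
  shows "\<alpha> = ramp n p a k"
proof
  fix x
  show "\<alpha> x = ramp n p a k x"
  proof (cases "x \<in> {1..n}")
    case False
    then show ?thesis using assms(1) unfolding Tn_def ramp_def by auto
  next
    case x: True
    have bounds: "a \<le> \<alpha> x" "\<alpha> x \<le> a + p - 1"
      using x assms(3) unfolding Im_def by auto
    have mono: "\<alpha> y \<le> \<alpha> z" if "y \<in> {1..n}" "z \<in> {1..n}" "y \<le> z" for y z
      using assms(2) that unfolding order_preserving_def by blast
    consider "x \<le> k" | "k \<le> x" "x \<le> k + (p - 1)" | "k + (p - 1) \<le> x"
      by linarith
    then show ?thesis
    proof cases
      case 1
      then have "\<alpha> x \<le> \<alpha> (k + 0)" using mono[of x k] x k \<open>1 \<le> p\<close> \<open>p \<le> n\<close> by auto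
      then show ?thesis using 1 x bounds slope[of 0] \<open>1 \<le> p\<close> unfolding ramp_def by auto
    next
      case 2
      then have "\<alpha> x = a + (x - k)" using slope[of "x - k"] \<open>1 \<le> p\<close> by auto
      then show ?thesis using 2 x unfolding ramp_def by auto
    next
      case 3
      then have "\<alpha> (k + (p - 1)) \<le> \<alpha> x" using mono[of "k + (p - 1)" x] x k \<open>p \<le> n\<close> by auto
      then show ?thesis using 3 x bounds slope[of "p - 1"] \<open>1 \<le> p\<close> unfolding ramp_def by auto
    qed
  qed
qed

lemma Kp_imp_ramp:
  assumes "\<alpha> \<in> Kp n p" "1 \<le> p" "p \<le> n"
  obtains a k where "a \<in> {1..n-p+1}" "k \<in> {1..n-p+1}" "\<alpha> = ramp n p a k"
proof -
  obtain \<beta> where \<alpha>: "\<alpha> \<in> OCT n" and \<beta>: "\<beta> \<in> OCT n" and reg: "tmul (tmul \<alpha> \<beta>) \<alpha> = \<alpha>"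
    and card: "card (Im n \<alpha>) = p"
    using assms(1) unfolding Kp_def RegOCT_def by auto
  define a where "a = \<alpha> 1"
  define k where "k = \<beta> a"
  have Im: "Im n \<alpha> = {a..a+p-1}"
    using Im_OCT_eq_interval[OF \<alpha>] card assms(2,3) unfolding a_def by simp arith
  have range: "Im n \<alpha> \<subseteq> {1..n}" "\<And>x. x \<in> {1..n} \<Longrightarrow> \<beta> x \<in> {1..n}"
    using \<alpha> \<beta> unfolding OCT_def Tn_def Im_def by auto
  have shift: "\<beta> (a + i) = k + i" if "i < p" for i
    using regular_inverse_shift[OF _ \<beta> reg Im that] \<alpha> unfolding k_def OCT_def by blast
  have slope: "\<alpha> (k + i) = a + i" if "i < p" for i
  proof -
    have "a + i \<in> \<alpha> ` {1..n}"
      using Im that unfolding Im_def by auto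
    then obtain x where x: "a + i = \<alpha> x" by blast
    have "\<alpha> (\<beta> (\<alpha> x)) = \<alpha> x"
      using reg unfolding tmul_def by (metis comp_apply)
    then show ?thesis
      using shift[OF that] x by simp
  qed
  have "a \<in> {1..n-p+1}"
    using Im range(1) assms(2) by auto
  moreover have "k \<in> {1..n-p+1}"
  proof -
    have "a \<in> {1..n}" "a + (p - 1) \<in> {1..n}"
      using Im range(1) assms(2) by auto
    then have "1 \<le> \<beta> a" "\<beta> (a + (p - 1)) \<le> n"
      using range(2) atLeastAtMost_iff by blast+
    then show ?thesis
      using shift[of "p - 1"] assms(2) unfolding k_def by auto
  qed
  moreover have "\<alpha> = ramp n p a k"
    using order_preserving_eq_ramp[OF _ _ Im calculation(2) assms(2,3) slope] \<alpha>
    unfolding OCT_def by blast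
  ultimately show ?thesis using that by blast
qed

lemma Kp_eq_ramps:
  assumes "1 \<le> p" "p \<le> n"
  shows "Kp n p = {ramp n p a k | a k. a \<in> {1..n-p+1} \<and> k \<in> {1..n-p+1}}"
  using Kp_imp_ramp[OF _ assms] ramp_in_Kp[OF _ _ assms] by blast

lemma tmul_ramp_ramp:
  assumes "a \<in> {1..n-p+1}" "1 \<le> p" "p \<le> n"
  shows "tmul (ramp n p a k) (ramp n p b a) = ramp n p b k"
  using assms unfolding tmul_def ramp_def by (auto simp: fun_eq_iff min_def)

lemma ramp_not_inj_on:
  assumes "a \<in> {1..n-p+1}" "l \<in> {1..n-p+1}" "a \<noteq> l" "2 \<le> p" "p \<le> n"
  shows "\<not> inj_on (ramp n p b l) {a..a+p-1}"
proof (cases "a < l")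
  case True
  then have "ramp n p b l a = ramp n p b l (a + 1)"
    using assms unfolding ramp_def by auto
  then show ?thesis
    using assms(4) unfolding inj_on_def by fastforce
next
  case False
  then have "ramp n p b l (a + p - 2) = ramp n p b l (a + p - 1)"
    using assms unfolding ramp_def by auto
  then show ?thesis
    using assms(4) unfolding inj_on_def by fastforce
qed

lemma qmul_ramp_ramp:
  assumes "a \<in> {1..n-p+1}" "k \<in> {1..n-p+1}" "b \<in> {1..n-p+1}" "l \<in> {1..n-p+1}"
    and "2 \<le> p" "p \<le> n"
  shows "qmul n p (Some (ramp n p a k)) (Some (ramp n p b l))
    = (if a = l then Some (ramp n p b k) else None)"
proof (cases "a = l")
  case True
  then show ?thesis
    using tmul_ramp_ramp[of a n p k b] Im_ramp[of b n p k] assms by simp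
next
  case False
  have "Im n (tmul (ramp n p a k) (ramp n p b l)) = ramp n p b l ` {a..a+p-1}"
    using Im_tmul Im_ramp[of a n p k] assms by simp
  moreover have "card (ramp n p b l ` {a..a+p-1}) \<noteq> p"
    using ramp_not_inj_on[OF assms(1,4) False assms(5,6)] assms(5)
      inj_on_iff_eq_card[of "{a..a+p-1}" "ramp n p b l"]
    by simp
  ultimately show ?thesis
    using False by simp
qed

lemma gen_least:
  assumes "B \<subseteq> S" "\<And>x y. x \<in> S \<Longrightarrow> y \<in> S \<Longrightarrow> qmul n p x y \<in> S"
  shows "gen n p B \<subseteq> S"
proof
  fix x assume "x \<in> gen n p B"
  then show "x \<in> S"
    by (induction rule: gen.induct) (use assms in auto)
qed

definition ramp_block :: "nat \<Rightarrow> nat \<Rightarrow> nat set \<Rightarrow> nat set \<Rightarrow> (nat \<Rightarrow> nat) option set" where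
  "ramp_block n p I K = insert None (Some ` {ramp n p a k | a k. a \<in> I \<and> k \<in> K})"

lemma Qp_eq_ramp_block:
  assumes "1 \<le> p" "p \<le> n"
  shows "Qp n p = ramp_block n p {1..n-p+1} {1..n-p+1}"
  unfolding Qp_def ramp_block_def Kp_eq_ramps[OF assms] ..

lemma Some_ramp_in_ramp_block_iff:
  assumes "a \<in> {1..n-p+1}" "k \<in> {1..n-p+1}" "K \<subseteq> {1..n-p+1}" "2 \<le> p" "p \<le> n"
  shows "Some (ramp n p a k) \<in> ramp_block n p I K \<longleftrightarrow> a \<in> I \<and> k \<in> K"
proof
  assume "Some (ramp n p a k) \<in> ramp_block n p I K"
  then obtain b l where "b \<in> I" "l \<in> K" "ramp n p a k = ramp n p b l"
    unfolding ramp_block_def by auto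
  moreover have "l \<in> {1..n-p+1}"
    using \<open>l \<in> K\<close> assms(3) by blast
  ultimately show "a \<in> I \<and> k \<in> K"
    using ramp_eq_iff[OF assms(2) _ assms(4,5)] by simp
qed (unfold ramp_block_def, blast)

lemma qmul_closed_ramp_block:
  assumes "I \<subseteq> {1..n-p+1}" "K \<subseteq> {1..n-p+1}" "2 \<le> p" "p \<le> n"
    and "x \<in> ramp_block n p I K" "y \<in> ramp_block n p I K"
  shows "qmul n p x y \<in> ramp_block n p I K"
proof (cases "x = None \<or> y = None")
  case True
  then show ?thesis by (cases x) (auto simp: ramp_block_def)
next
  case False
  then obtain a k b l where abkl: "a \<in> I" "k \<in> K" "b \<in> I" "l \<in> K"
    and xy: "x = Some (ramp n p a k)" "y = Some (ramp n p b l)"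
    using assms(5,6) unfolding ramp_block_def by blast
  then have "qmul n p x y = (if a = l then Some (ramp n p b k) else None)"
    using qmul_ramp_ramp[of a n p k b l] assms(1-4) by blast
  then show ?thesis
    using abkl unfolding ramp_block_def by auto
qed

lemma gen_subset_ramp_block:
  assumes "B \<subseteq> ramp_block n p I K" "I \<subseteq> {1..n-p+1}" "K \<subseteq> {1..n-p+1}" "2 \<le> p" "p \<le> n"
  shows "gen n p B \<subseteq> ramp_block n p I K"
  using gen_least[OF assms(1)] qmul_closed_ramp_block[OF assms(2-5)] by blast

lemma R_eta_eq:
  assumes "1 \<le> p" "p \<le> n"
  shows "R_eta n p = {ramp n p 1 k | k. k \<in> {1..n-p+1}}"
proof -
  have "Im n (eta n p) = {1..p}"
    using Im_ramp[of 1 n p "n - p + 1"] eta_eq_ramp assms by simp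
  moreover have "Im n (ramp n p a k) = {1..p} \<longleftrightarrow> a = 1"
    if "a \<in> {1..n-p+1}" "k \<in> {1..n-p+1}" for a k
    using Im_ramp[OF that assms] assms by auto
  ultimately show ?thesis
    unfolding R_eta_def Kp_eq_ramps[OF assms] by auto
qed

lemma L_delta_eq:
  assumes "2 \<le> p" "p \<le> n"
  shows "L_delta n p = {ramp n p a 1 | a. a \<in> {1..n-p+1}}"
proof -
  have "ker n (ramp n p a k) = ker n (delta n p) \<longleftrightarrow> k = 1" if "k \<in> {1..n-p+1}" for a k
    using ker_ramp_eq_iff[OF that _ assms] delta_eq_ramp assms by simp
  moreover have "1 \<le> p" using assms(1) by simp
  ultimately show ?thesis
    unfolding L_delta_def using Kp_eq_ramps[of p n] assms(2) by auto
qed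

definition ramp_axes :: "nat \<Rightarrow> nat \<Rightarrow> (nat \<Rightarrow> nat) set" where
  "ramp_axes n p = {ramp n p a k | a k. a \<in> {1..n-p+1} \<and> k \<in> {1..n-p+1} \<and> (a = 1) \<noteq> (k = 1)}"

lemma generators_eq_ramp_axes:
  assumes "2 \<le> p" "p \<le> n"
  shows "(R_eta n p \<union> L_delta n p) - {delta n p} = ramp_axes n p"
proof -
  have p: "1 \<le> p" using assms(1) by simp
  have "ramp n p a k \<noteq> ramp n p 1 1 \<longleftrightarrow> a \<noteq> 1 \<or> k \<noteq> 1"
    if "k \<in> {1..n-p+1}" for a k
    using ramp_eq_iff[OF that _ assms, of 1 a 1] assms by simp
  then show ?thesis
    unfolding R_eta_eq[OF p assms(2)] L_delta_eq[OF assms] ramp_axes_def delta_eq_ramp[OF p assms(2)]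
    by (auto 4 3)
qed

lemma gen_ramp_axes:
  assumes "2 \<le> p" "p < n"
  shows "gen n p (Some ` ramp_axes n p) = ramp_block n p {1..n-p+1} {1..n-p+1}"
    (is "gen n p ?A = ramp_block n p ?P ?P")
proof
  show "gen n p ?A \<subseteq> ramp_block n p ?P ?P"
    using gen_subset_ramp_block[of ?A n p ?P ?P] assms
    unfolding ramp_axes_def ramp_block_def by auto
next
  have P: "1 \<in> ?P" "2 \<in> ?P" and p: "2 \<le> p" "p \<le> n"
    using assms by auto
  have prod: "qmul n p (Some (ramp n p a k)) (Some (ramp n p b l))
      = (if a = l then Some (ramp n p b k) else None)"
    if "a \<in> ?P" "k \<in> ?P" "b \<in> ?P" "l \<in> ?P" for a k b l
    using qmul_ramp_ramp[OF that p] .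
  have generator_in_gen: "Some (ramp n p a k) \<in> gen n p ?A"
    if "a \<in> ?P" "k \<in> ?P" "(a = 1) \<noteq> (k = 1)" for a k
  proof -
    have "ramp n p a k \<in> ramp_axes n p"
      using that unfolding ramp_axes_def by blast
    then show ?thesis by (blast intro: gen.base)
  qed
  have row_or_column_in_gen: "Some (ramp n p a k) \<in> gen n p ?A"
    if "a \<in> ?P" "k \<in> ?P" "a = 1 \<or> k = 1" for a k
  proof (cases "a = 1 \<and> k = 1")
    case True
    from gen.mul[OF generator_in_gen[of 2 1] generator_in_gen[of 1 2]] show ?thesis
      using True prod[of 2 1 1 2] P by simp
  next
    case False
    then show ?thesis
      using generator_in_gen that by blast
  qed
  show "ramp_block n p ?P ?P \<subseteq> gen n p ?A"
  proof
    fix x assume "x \<in> ramp_block n p ?P ?P"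
    then consider "x = None" | a k where "a \<in> ?P" "k \<in> ?P" "x = Some (ramp n p a k)"
      unfolding ramp_block_def by blast
    then show "x \<in> gen n p ?A"
    proof cases
      case 1
      show ?thesis
        using gen.mul[OF row_or_column_in_gen[of 1 2] row_or_column_in_gen[of 1 2]] prod[of 1 2 1 2] P 1 by simp
    next
      case 2
      show ?thesis
        using gen.mul[OF row_or_column_in_gen[of 1 k] row_or_column_in_gen[of a 1]] prod[of 1 k a 1] P 2 by simp
    qed
  qed
qed

lemma gen_ramp_axes_minimal:
  assumes "B \<subset> Some ` ramp_axes n p" "2 \<le> p" "p \<le> n"
  shows "gen n p B \<noteq> ramp_block n p {1..n-p+1} {1..n-p+1}"
    (is "_ \<noteq> ramp_block n p ?P ?P")
proof -
  obtain a0 k0 where x: "a0 \<in> ?P" "k0 \<in> ?P" "(a0 = 1) \<noteq> (k0 = 1)" "Some (ramp n p a0 k0) \<notin> B"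
    using assms(1) unfolding ramp_axes_def by blast
  have B: "\<exists>a k. a \<in> ?P \<and> k \<in> ?P \<and> (a = 1) \<noteq> (k = 1) \<and> y = Some (ramp n p a k)"
    if "y \<in> B" for y
    using assms(1) that unfolding ramp_axes_def by blast
  obtain I K where IK: "I \<subseteq> ?P" "K \<subseteq> ?P" "B \<subseteq> ramp_block n p I K" "\<not> (a0 \<in> I \<and> k0 \<in> K)"
  proof (cases "a0 = 1")
    case True
    have "B \<subseteq> ramp_block n p ?P (?P - {k0})"
    proof
      fix y assume "y \<in> B"
      with B obtain a k where "a \<in> ?P" "k \<in> ?P" "(a = 1) \<noteq> (k = 1)" "y = Some (ramp n p a k)"
        by blast
      moreover have "k \<noteq> k0"
        using calculation True x \<open>y \<in> B\<close> by auto
      ultimately show "y \<in> ramp_block n p ?P (?P - {k0})"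
        unfolding ramp_block_def by blast
    qed
    then show ?thesis using that[of ?P "?P - {k0}"] by blast
  next
    case False
    have "B \<subseteq> ramp_block n p (?P - {a0}) ?P"
    proof
      fix y assume "y \<in> B"
      with B obtain a k where "a \<in> ?P" "k \<in> ?P" "(a = 1) \<noteq> (k = 1)" "y = Some (ramp n p a k)"
        by blast
      moreover have "a \<noteq> a0"
        using calculation False x \<open>y \<in> B\<close> by auto
      ultimately show "y \<in> ramp_block n p (?P - {a0}) ?P"
        unfolding ramp_block_def by blast
    qed
    then show ?thesis using that[of "?P - {a0}" ?P] by blast
  qed
  have "gen n p B \<subseteq> ramp_block n p I K"
    using gen_subset_ramp_block[OF IK(3,1,2) assms(2,3)] .
  moreover have "Some (ramp n p a0 k0) \<notin> ramp_block n p I K"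
    using Some_ramp_in_ramp_block_iff[OF x(1,2) IK(2) assms(2,3)] IK(4) by blast
  moreover have "Some (ramp n p a0 k0) \<in> ramp_block n p ?P ?P"
    using x(1,2) unfolding ramp_block_def by blast
  ultimately show ?thesis by blast
qed

theorem lemma8:
  fixes n p :: nat
  assumes "n \<ge> 4" and "2 \<le> p" and "p \<le> n - 1"
  defines "A \<equiv> Some ` ((R_eta n p \<union> L_delta n p) - {delta n p})"
  shows "gen n p A = Qp n p \<and> (\<forall>B. B \<subset> A \<longrightarrow> gen n p B \<noteq> Qp n p)"
proof -
  have p: "2 \<le> p" "p < n"
    using assms(2,3) by auto
  have A: "A = Some ` ramp_axes n p"
    unfolding A_def generators_eq_ramp_axes[OF p(1) less_imp_le[OF p(2)]] ..
  have Q: "Qp n p = ramp_block n p {1..n-p+1} {1..n-p+1}"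
    using Qp_eq_ramp_block p by simp
  show ?thesis
    unfolding A Q using gen_ramp_axes[OF p] gen_ramp_axes_minimal p by simp
qed

end
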